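(* Let $\mathbf{x}_1,\dots,\mathbf{x}_m\in\mathbb{R}^n$ and $y_1,\dots,y_m\in\mathbb{R}$ be such that $y_i=\phi(\mathbf{x}_i)$, $i=1,\dots,m$, for some function $\phi:\mathbb{R}^n\to\mathbb{R}$. Then for every $\varepsilon>0$ there exists a $\mathrm{DLSE}_T$ neural network whose input-output function $d_T$ satisfies $|d_T(\mathbf{x}_i)-y_i|\leqslant\varepsilon$ for $i=1,\dots,m$.
   Context: A $\mathrm{DLSE}_T$ neural network (with temperature $T>0$, $n$ inputs and $K$ hidden nodes in each of its two components, $K$ a positive integer) is specified by vectors $\boldsymbol{\alpha}^{(k)},\boldsymbol{\gamma}^{(k)}\in\mathbb{R}^n$ and reals $\beta_k,\delta_k$, $k=1,\dots,K$, and its input-output function is $$d_T(\mathbf{x})=T\log\Big(\sum_{k=1}^K\exp\big((\langle\boldsymbol{\alpha}^{(k)},\mathbf{x}\rangle+\beta_k)/T\big)\Big)-T\log\Big(\sum_{k=1}^K\exp\big((\langle\boldsymbol{\gamma}^{(k)},\mathbf{x}\rangle+\delta_k)/T\big)\Big),$$ i.e., the difference of two one-hidden-layer networks with hidden activation $s\mapsto\exp(s/T)$, unit weights to the output node, and output activation $s\mapsto T\log s$. *)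

theory Defs
  imports "HOL-Analysis.Analysis"
begin

definition dlse ::
  "real \<Rightarrow> nat \<Rightarrow> (nat \<Rightarrow> real ^ 'n) \<Rightarrow> (nat \<Rightarrow> real) \<Rightarrow>
   (nat \<Rightarrow> real ^ 'n) \<Rightarrow> (nat \<Rightarrow> real) \<Rightarrow> real ^ 'n \<Rightarrow> real" where
  "dlse T K \<alpha> \<beta> \<gamma> \<delta> x =
     T * ln (\<Sum>k=1..K. exp ((\<alpha> k \<bullet> x + \<beta> k) / T))
   - T * ln (\<Sum>k=1..K. exp ((\<gamma> k \<bullet> x + \<delta> k) / T))"

end

theory Submission
  imports Defs "HOL-Real_Asymp.Real_Asymp"
begin

text \<open>Choose \<open>\<alpha>\<^sub>k = \<gamma>\<^sub>k = 2c x\<^sub>k\<close>, \<open>\<beta>\<^sub>k = y\<^sub>k - c|x\<^sub>k|\<^sup>2\<close> and \<open>\<delta>\<^sub>k = -c|x\<^sub>k|\<^sup>2\<close>.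
  Completing the square, the common term \<open>c|x|\<^sup>2\<close> cancels between the two log-sum-exp
  components, and \<open>d\<^sub>T(x\<^sub>i)\<close> becomes \<open>T\<close> times the logarithm of a weighted mean of the
  values \<open>exp(y\<^sub>k/T)\<close> with Gaussian weights \<open>exp(-c|x\<^sub>i - x\<^sub>k|\<^sup>2/T)\<close>. As \<open>c \<rightarrow> \<infinity>\<close> the
  weights concentrate on the nodes \<open>x\<^sub>k = x\<^sub>i\<close>, where \<open>y\<^sub>k = y\<^sub>i\<close> because the data come
  from a function; hence \<open>d\<^sub>T(x\<^sub>i) \<rightarrow> y\<^sub>i\<close> for each of the finitely many \<open>i\<close>.\<close>

lemma log_sum_exp_shift:
  fixes a :: "'a \<Rightarrow> real"
  assumes "finite A" "A \<noteq> {}" "T > 0"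
  shows "T * ln (\<Sum>k\<in>A. exp ((a k + s) / T)) = s + T * ln (\<Sum>k\<in>A. exp (a k / T))"
proof -
  have "(\<Sum>k\<in>A. exp ((a k + s) / T)) = exp (s / T) * (\<Sum>k\<in>A. exp (a k / T))"
    by (simp add: sum_distrib_left add_divide_distrib exp_add mult.commute)
  moreover have "(\<Sum>k\<in>A. exp (a k / T)) > 0"
    using assms by (intro sum_pos) auto
  ultimately show ?thesis
    using \<open>T > 0\<close> by (simp add: ln_mult distrib_left)
qed

lemma inner_scaled_complete_square:
  fixes x z :: "'a :: real_inner"
  shows "((2 * c) *\<^sub>R z) \<bullet> x + (b - c * (z \<bullet> z)) = (b - c * (norm (x - z))\<^sup>2) + c * (x \<bullet> x)"
  by (simp add: power2_norm_eq_inner inner_diff_left inner_diff_right inner_commute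
      algebra_simps)

lemma dlse_gaussian_kernel:
  assumes "T > 0" "K \<ge> 1"
  shows "dlse T K (\<lambda>k. (2 * c) *\<^sub>R z k) (\<lambda>k. b k - c * (z k \<bullet> z k))
                  (\<lambda>k. (2 * c) *\<^sub>R z k) (\<lambda>k. e k - c * (z k \<bullet> z k)) x
       = T * ln (\<Sum>k=1..K. exp ((b k - c * (norm (x - z k))\<^sup>2) / T))
       - T * ln (\<Sum>k=1..K. exp ((e k - c * (norm (x - z k))\<^sup>2) / T))"
  using assms
  by (simp add: dlse_def inner_scaled_complete_square log_sum_exp_shift
      del: inner_scaleR_left)

lemma tendsto_gaussian_weight:
  fixes r T :: real
  assumes "r \<ge> 0" "T > 0"
  shows "((\<lambda>c. exp (- c * r / T)) \<longlongrightarrow> (if r = 0 then 1 else 0)) at_top"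
proof (cases "r = 0")
  case False
  with assms show ?thesis by simp real_asymp
qed simp

lemma tendsto_gaussian_kernel_mean:
  fixes z :: "'a \<Rightarrow> 'b :: real_normed_vector" and y :: "'a \<Rightarrow> real"
  assumes "finite A" "i \<in> A" "T > 0"
    and consistent: "\<And>k. k \<in> A \<Longrightarrow> z k = z i \<Longrightarrow> y k = y i"
  shows "((\<lambda>c. T * ln (\<Sum>k\<in>A. exp ((y k - c * (norm (z i - z k))\<^sup>2) / T))
               - T * ln (\<Sum>k\<in>A. exp ((0 - c * (norm (z i - z k))\<^sup>2) / T)))
          \<longlongrightarrow> y i) at_top"
proof -
  define w where "w c k = exp (- c * (norm (z i - z k))\<^sup>2 / T)" for c k
  define W where "W = (\<Sum>k\<in>A. if z k = z i then 1 else 0 :: real)"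
  have W_pos: "W > 0"
    unfolding W_def using assms(1,2) by (intro sum_pos2[of _ i]) auto
  have w_lim: "((\<lambda>c. w c k) \<longlongrightarrow> (if z k = z i then 1 else 0)) at_top" for k
  proof -
    have "((norm (z i - z k))\<^sup>2 = 0) = (z k = z i)"
      by auto
    then show ?thesis
      using tendsto_gaussian_weight[OF zero_le_power2 \<open>T > 0\<close>, of "norm (z i - z k)"]
      by (simp add: w_def)
  qed
  have "((\<lambda>c. \<Sum>k\<in>A. exp (y k / T) * w c k)
          \<longlongrightarrow> (\<Sum>k\<in>A. exp (y k / T) * (if z k = z i then 1 else 0))) at_top"
    by (intro tendsto_intros w_lim)
  also have "(\<Sum>k\<in>A. exp (y k / T) * (if z k = z i then 1 else 0)) = exp (y i / T) * W"
    unfolding W_def sum_distrib_left by (intro sum.cong) (auto simp: consistent)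
  finally have num: "((\<lambda>c. \<Sum>k\<in>A. exp (y k / T) * w c k) \<longlongrightarrow> exp (y i / T) * W) at_top" .
  have den: "((\<lambda>c. \<Sum>k\<in>A. w c k) \<longlongrightarrow> W) at_top"
    unfolding W_def by (intro tendsto_intros w_lim)
  have "((\<lambda>c. T * ln (\<Sum>k\<in>A. exp (y k / T) * w c k) - T * ln (\<Sum>k\<in>A. w c k))
          \<longlongrightarrow> T * ln (exp (y i / T) * W) - T * ln W) at_top"
    using W_pos by (intro tendsto_intros num den) auto
  also have "T * ln (exp (y i / T) * W) - T * ln W = y i"
    using W_pos \<open>T > 0\<close> by (simp add: ln_mult algebra_simps)
  finally have lim: "((\<lambda>c. T * ln (\<Sum>k\<in>A. exp (y k / T) * w c k) - T * ln (\<Sum>k\<in>A. w c k))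
                     \<longlongrightarrow> y i) at_top" .
  have split: "exp ((b - c * (norm (z i - z k))\<^sup>2) / T) = exp (b / T) * w c k" for b c k
    unfolding w_def by (simp add: diff_divide_distrib exp_diff exp_minus field_simps)
  show ?thesis
    using lim by (simp only: split div_0 exp_zero mult_1_left)
qed

theorem theorem4:
  fixes x :: "nat \<Rightarrow> real ^ 'n" and y :: "nat \<Rightarrow> real" and m :: nat
    and \<phi> :: "real ^ 'n \<Rightarrow> real" and T \<epsilon> :: real
  assumes "\<And>i. i \<in> {1..m} \<Longrightarrow> y i = \<phi> (x i)"
    and "T > 0" and "\<epsilon> > 0"
  shows "\<exists>K::nat. K \<ge> 1 \<and> (\<exists>\<alpha> \<beta> \<gamma> \<delta>.
           \<forall>i \<in> {1..m}. \<bar>dlse T K \<alpha> \<beta> \<gamma> \<delta> (x i) - y i\<bar> \<le> \<epsilon>)"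
proof (cases "m = 0")
  case True
  then show ?thesis by auto
next
  case False
  then have "m \<ge> 1" by simp
  define net where "net c = dlse T m (\<lambda>k. (2 * c) *\<^sub>R x k) (\<lambda>k. y k - c * (x k \<bullet> x k))
                                    (\<lambda>k. (2 * c) *\<^sub>R x k) (\<lambda>k. 0 - c * (x k \<bullet> x k))" for c
  have "\<forall>\<^sub>F c in at_top. \<forall>i \<in> {1..m}. dist (net c (x i)) (y i) < \<epsilon>"
  proof (intro eventually_ball_finite ballI)
    fix i assume "i \<in> {1..m}"
    with assms have "((\<lambda>c. net c (x i)) \<longlongrightarrow> y i) at_top"
      unfolding net_def dlse_gaussian_kernel[OF \<open>T > 0\<close> \<open>m \<ge> 1\<close>]
      by (intro tendsto_gaussian_kernel_mean) auto
    then show "\<forall>\<^sub>F c in at_top. dist (net c (x i)) (y i) < \<epsilon>"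
      using \<open>\<epsilon> > 0\<close> by (rule tendstoD)
  qed simp
  then obtain c where "\<forall>i \<in> {1..m}. dist (net c (x i)) (y i) < \<epsilon>"
    by (auto simp: eventually_at_top_linorder)
  then have "\<forall>i \<in> {1..m}. \<bar>net c (x i) - y i\<bar> \<le> \<epsilon>"
    by (auto simp: dist_real_def less_imp_le)
  with \<open>m \<ge> 1\<close> show ?thesis
    unfolding net_def by blast
qed

end
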